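(* Let $\Gamma\subseteq\Lambda^+$ be reflective, with $S\subseteq\mathbb Z\Gamma$, $E(\Gamma)$ part of a basis of $(\mathbb Z\Gamma)^*$, and $\mathbb Z\Gamma$ $W$-invariant. Then $\langle\delta,\alpha\rangle\ge0$ for all $\delta\in E(\Gamma)$ and all $\alpha\in S$.
   Context: $G$: complex connected reductive group with Borel $B$, maximal torus $T$, weight lattice $\Lambda$, dominant weights $\Lambda^+$, simple roots $S$, Weyl group $W$ (acting on $\Lambda$ and dually), coroots $\alpha^\vee\in\mathrm{Hom}(\Lambda,\mathbb Z)$. A finitely generated $\Gamma\subseteq\Lambda^+$ is normal if $\mathbb Z\Gamma\cap\mathbb Q_{\ge0}\Gamma=\Gamma$. $\Gamma$ is reflective if it is normal and (1) $\mathrm{rk}\,\mathbb Z\Gamma=\mathrm{rk}\,\Lambda$; (2) the set of hyperplanes spanned by the codimension-1 faces of the cone $\mathbb Q_{\ge0}\Gamma$ is $W$-stable; (3) every codimension-1 face of $\mathbb Q_{\ge0}\Gamma$ meets the open positive Weyl chamber. $\Gamma^\vee=\{v\in\mathrm{Hom}_{\mathbb Z}(\mathbb Z\Gamma,\mathbb Q):\langle v,\gamma\rangle\ge0\ \forall\gamma\in\Gamma\}$; $E(\Gamma)$ is the set of primitive elements of $(\mathbb Z\Gamma)^*$ spanning extremal rays of $\Gamma^\vee$. *)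

theory Defs
  imports "HOL-Analysis.Analysis"
begin

text \<open>Model: the weight lattice Lambda is the integer lattice in real^'n; Hom(Lambda, Z) is
identified with the integer lattice as well via the standard inner product, so the pairing
of a coweight v with a weight x is v \<bullet> x.  A connected complex reductive group with
(B,T) is encoded by its (reduced) root datum together with the base S of simple roots.\<close>

definition lattice_pts :: "(real^'n) set" where
  "lattice_pts = {x. \<forall>i. x $ i \<in> \<int>}"

definition refl :: "real^'n \<Rightarrow> real^'n \<Rightarrow> real^'n \<Rightarrow> real^'n" where
  "refl a av x = x - (av \<bullet> x) *\<^sub>R a"

definition root_datum :: "(real^'n) set \<Rightarrow> (real^'n \<Rightarrow> real^'n) \<Rightarrow> bool" where
  "root_datum R cor \<longleftrightarrow> finite R \<and> R \<subseteq> lattice_pts \<and> cor ` R \<subseteq> lattice_pts \<and> inj_on cor R \<and>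
     (\<forall>a\<in>R. cor a \<bullet> a = 2 \<and> refl a (cor a) ` R \<subseteq> R \<and> refl (cor a) a ` (cor ` R) \<subseteq> cor ` R)"

definition reduced :: "(real^'n) set \<Rightarrow> bool" where
  "reduced R \<longleftrightarrow> (\<forall>a\<in>R. 2 *\<^sub>R a \<notin> R)"

definition is_base :: "(real^'n) set \<Rightarrow> (real^'n) set \<Rightarrow> bool" where
  "is_base R S \<longleftrightarrow> S \<subseteq> R \<and> independent S \<and>
     (\<forall>a\<in>R. \<exists>c. (\<forall>s\<in>S. c s \<in> \<nat>) \<and> (a = (\<Sum>s\<in>S. c s *\<^sub>R s) \<or> a = - (\<Sum>s\<in>S. c s *\<^sub>R s)))"

inductive_set weyl_group :: "(real^'n) set \<Rightarrow> (real^'n \<Rightarrow> real^'n) \<Rightarrow> (real^'n \<Rightarrow> real^'n) set"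
  for R cor where
  weyl_id: "id \<in> weyl_group R cor"
| weyl_step: "w \<in> weyl_group R cor \<Longrightarrow> a \<in> R \<Longrightarrow> refl a (cor a) \<circ> w \<in> weyl_group R cor"

definition dominant :: "(real^'n) set \<Rightarrow> (real^'n \<Rightarrow> real^'n) \<Rightarrow> (real^'n) set" where
  "dominant S cor = {x \<in> lattice_pts. \<forall>a\<in>S. cor a \<bullet> x \<ge> 0}"

definition open_chamber :: "(real^'n) set \<Rightarrow> (real^'n \<Rightarrow> real^'n) \<Rightarrow> (real^'n) set" where
  "open_chamber S cor = {x. \<forall>a\<in>S. cor a \<bullet> x > 0}"

definition combos :: "real set \<Rightarrow> (real^'n) set \<Rightarrow> (real^'n) set" where
  "combos K A = {x. \<exists>F c. finite F \<and> F \<subseteq> A \<and> (\<forall>a\<in>F. c a \<in> K) \<and> x = (\<Sum>a\<in>F. c a *\<^sub>R a)}"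

abbreviation int_span :: "(real^'n) set \<Rightarrow> (real^'n) set" where
  "int_span A \<equiv> combos \<int> A"
abbreviation nat_span :: "(real^'n) set \<Rightarrow> (real^'n) set" where
  "nat_span A \<equiv> combos \<nat> A"
abbreviation rat_cone :: "(real^'n) set \<Rightarrow> (real^'n) set" where
  "rat_cone A \<equiv> combos {q\<in>\<rat>. q \<ge> 0} A"
abbreviation real_cone :: "(real^'n) set \<Rightarrow> (real^'n) set" where
  "real_cone A \<equiv> combos {r. r \<ge> 0} A"

definition fg_monoid :: "(real^'n) set \<Rightarrow> bool" where
  "fg_monoid \<Gamma> \<longleftrightarrow> (\<exists>G. finite G \<and> \<Gamma> = nat_span G)"

definition normal_monoid :: "(real^'n) set \<Rightarrow> bool" where
  "normal_monoid \<Gamma> \<longleftrightarrow> int_span \<Gamma> \<inter> rat_cone \<Gamma> = \<Gamma>"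

definition facets :: "(real^'n) set \<Rightarrow> (real^'n) set set" where
  "facets C = {F. F face_of C \<and> aff_dim F = aff_dim C - 1}"

definition reflective :: "(real^'n) set \<Rightarrow> (real^'n) set \<Rightarrow> (real^'n \<Rightarrow> real^'n) \<Rightarrow> (real^'n) set \<Rightarrow> bool" where
  "reflective R S cor \<Gamma> \<longleftrightarrow> normal_monoid \<Gamma> \<and>
     dim (int_span \<Gamma>) = DIM(real^'n) \<and>
     (\<forall>w\<in>weyl_group R cor. \<forall>F\<in>facets (real_cone \<Gamma>). \<exists>F'\<in>facets (real_cone \<Gamma>). w ` span F = span F') \<and>
     (\<forall>F\<in>facets (real_cone \<Gamma>). F \<inter> open_chamber S cor \<noteq> {})"

text \<open>Dual lattice (Z Gamma)^* and dual cone Gamma^vee (Hom(Z Gamma, Q) identified with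
Q^n via the pairing, which is legitimate since Z Gamma has full rank).\<close>
definition dual_lattice :: "(real^'n) set \<Rightarrow> (real^'n) set" where
  "dual_lattice \<Gamma> = {v. \<forall>x\<in>int_span \<Gamma>. v \<bullet> x \<in> \<int>}"

definition dual_cone :: "(real^'n) set \<Rightarrow> (real^'n) set" where
  "dual_cone \<Gamma> = {v. \<forall>g\<in>\<Gamma>. v \<bullet> g \<ge> 0}"

definition primitive_in :: "(real^'n) set \<Rightarrow> real^'n \<Rightarrow> bool" where
  "primitive_in L v \<longleftrightarrow> v \<in> L \<and> v \<noteq> 0 \<and> (\<forall>k::nat. k \<ge> 2 \<longrightarrow> (1 / real k) *\<^sub>R v \<notin> L)"

definition E_set :: "(real^'n) set \<Rightarrow> (real^'n) set" where
  "E_set \<Gamma> = {d. primitive_in (dual_lattice \<Gamma>) d \<and>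
      {t *\<^sub>R d | t. t \<ge> 0} face_of dual_cone \<Gamma>}"

definition int_independent :: "(real^'n) set \<Rightarrow> bool" where
  "int_independent B \<longleftrightarrow> (\<forall>F c. finite F \<and> F \<subseteq> B \<and> (\<forall>b\<in>F. c b \<in> \<int>) \<and> (\<Sum>b\<in>F. c b *\<^sub>R b) = 0
       \<longrightarrow> (\<forall>b\<in>F. c b = 0))"

definition part_of_lattice_basis :: "(real^'n) set \<Rightarrow> (real^'n) set \<Rightarrow> bool" where
  "part_of_lattice_basis E L \<longleftrightarrow> (\<exists>B. E \<subseteq> B \<and> int_independent B \<and> int_span B = L)"

end

theory Submission imports Defs begin

text \<open>Let \<open>C\<close> be the real cone of \<open>\<Gamma>\<close>. Since \<open>C\<close> is full-dimensional and \<open>\<delta> \<in> E(\<Gamma>)\<close> spans an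
  extremal ray of the dual cone, \<open>F = C \<inter> \<delta>\<^sup>\<bottom>\<close> is a facet of \<open>C\<close>; it contains a point \<open>x\<close> of the open
  chamber, and the simple reflection \<open>s\<^sub>\<alpha>\<close> carries its span onto the span of another facet \<open>F'\<close>.
  If \<open>\<langle>\<delta>, \<alpha>\<rangle> < 0\<close>, then \<open>\<delta> - \<langle>\<delta>, \<alpha>\<rangle> \<alpha>\<^sup>\<or>\<close> vanishes on \<open>F'\<close>; as a positive combination of two
  functionals nonnegative on \<open>C\<close>, it forces \<open>\<alpha>\<^sup>\<or>\<close> to vanish on \<open>F'\<close>, contradicting
  \<open>\<langle>\<alpha>\<^sup>\<or>, s\<^sub>\<alpha> x\<rangle> = -\<langle>\<alpha>\<^sup>\<or>, x\<rangle> < 0\<close>.\<close>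

lemma combos_base: "(a::real^'n) \<in> A \<Longrightarrow> 1 \<in> K \<Longrightarrow> a \<in> combos K A"
  unfolding combos_def by (intro CollectI exI[of _ "{a}"] exI[of _ "\<lambda>_. 1"]) auto

lemma zero_in_combos: "0 \<in> combos K (A::(real^'n) set)"
  unfolding combos_def by (intro CollectI exI[of _ "{}"]) auto

lemma combos_subset_span: "combos K (A::(real^'n) set) \<subseteq> span A"
  unfolding combos_def by (auto intro!: span_sum span_scale) (auto intro: span_base)

lemma inner_combos_nonneg:
  fixes A :: "(real^'n) set"
  assumes "\<forall>g\<in>A. v \<bullet> g \<ge> 0" and "K \<subseteq> {r. r \<ge> 0}" and "x \<in> combos K A"
  shows "v \<bullet> x \<ge> 0"
proof -
  from assms(3) obtain F c where "finite F" "F \<subseteq> A" "\<forall>a\<in>F. c a \<in> K" "x = (\<Sum>a\<in>F. c a *\<^sub>R a)"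
    unfolding combos_def by blast
  with assms(1,2) show ?thesis
    by (auto simp: inner_sum_right intro!: sum_nonneg mult_nonneg_nonneg)
qed

lemma inner_real_cone_nonneg:
  "\<forall>g\<in>A. v \<bullet> g \<ge> 0 \<Longrightarrow> x \<in> real_cone (A::(real^'n) set) \<Longrightarrow> v \<bullet> x \<ge> 0"
  using inner_combos_nonneg by blast

lemma dual_cone_nat_span: "dual_cone (nat_span G) = {v. \<forall>g\<in>(G::(real^'n) set). v \<bullet> g \<ge> 0}"
proof
  show "dual_cone (nat_span G) \<subseteq> {v. \<forall>g\<in>G. v \<bullet> g \<ge> 0}"
    unfolding dual_cone_def using combos_base[of _ G \<nat>] by auto
  show "{v. \<forall>g\<in>G. v \<bullet> g \<ge> 0} \<subseteq> dual_cone (nat_span G)"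
    unfolding dual_cone_def using inner_combos_nonneg[of G _ \<nat>]
    by (auto simp: Nats_def image_subset_iff)
qed

lemma convex_real_cone: "convex (real_cone (A::(real^'n) set))"
proof (rule convexI)
  fix x y :: "real^'n" and u v :: real
  assume x: "x \<in> real_cone A" and y: "y \<in> real_cone A" and uv: "0 \<le> u" "0 \<le> v"
  from x obtain F1 c1 where F1: "finite F1" "F1 \<subseteq> A" "\<forall>a\<in>F1. c1 a \<ge> 0" "x = (\<Sum>a\<in>F1. c1 a *\<^sub>R a)"
    unfolding combos_def by blast
  from y obtain F2 c2 where F2: "finite F2" "F2 \<subseteq> A" "\<forall>a\<in>F2. c2 a \<ge> 0" "y = (\<Sum>a\<in>F2. c2 a *\<^sub>R a)"
    unfolding combos_def by blast
  define c where "c a = u * (if a \<in> F1 then c1 a else 0) + v * (if a \<in> F2 then c2 a else 0)" for a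
  have "x = (\<Sum>a\<in>F1\<union>F2. (if a \<in> F1 then c1 a else 0) *\<^sub>R a)"
    using F1 F2 by (simp add: if_distrib[of "\<lambda>t. t *\<^sub>R _"] sum.If_cases Int_absorb2)
  moreover have "y = (\<Sum>a\<in>F1\<union>F2. (if a \<in> F2 then c2 a else 0) *\<^sub>R a)"
    using F1 F2 by (simp add: if_distrib[of "\<lambda>t. t *\<^sub>R _"] sum.If_cases Int_absorb1)
  ultimately have "u *\<^sub>R x + v *\<^sub>R y = (\<Sum>a\<in>F1\<union>F2. c a *\<^sub>R a)"
    by (simp add: c_def scaleR_sum_right sum.distrib scaleR_add_left)
  moreover have "\<forall>a\<in>F1\<union>F2. c a \<ge> 0" using F1 F2 uv by (auto simp: c_def)
  ultimately show "u *\<^sub>R x + v *\<^sub>R y \<in> real_cone A"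
    unfolding combos_def using F1 F2 by (intro CollectI exI[of _ "F1\<union>F2"] exI[of _ c]) auto
qed

lemma aff_dim_real_cone_full:
  assumes "dim (int_span \<Gamma>) = DIM(real^'n)"
  shows "aff_dim (real_cone (\<Gamma>::(real^'n) set)) = int DIM(real^'n)"
proof -
  have "int_span \<Gamma> \<subseteq> span (real_cone \<Gamma>)"
    using combos_subset_span span_mono[of \<Gamma> "real_cone \<Gamma>"] by (force intro: combos_base)
  then have "dim (int_span \<Gamma>) \<le> dim (real_cone \<Gamma>)"
    using dim_subset dim_span by metis
  moreover have "aff_dim (real_cone \<Gamma>) = int (dim (real_cone \<Gamma>))"
    by (intro aff_dim_zero hull_inc zero_in_combos)
  ultimately show ?thesis
    using assms aff_dim_le_DIM[of "real_cone \<Gamma>"] by linarith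
qed

lemma ray_face_symmetric_perturbation:
  fixes d u :: "'a::real_vector"
  assumes ray: "{t *\<^sub>R d | t. t \<ge> 0} face_of K"
    and "d - u \<in> K" "d + u \<in> K" "u \<noteq> 0"
  shows "\<exists>t. d + u = t *\<^sub>R d"
proof -
  have "d \<in> {t *\<^sub>R d | t. t \<ge> 0}" by (intro CollectI exI[of _ 1]) auto
  moreover have "d \<in> open_segment (d - u) (d + u)"
  proof -
    have "midpoint (d - u) (d + u) = d"
      by (simp add: midpoint_def algebra_simps flip: scaleR_add_left)
    moreover have "d - u \<noteq> d + u" using \<open>u \<noteq> 0\<close> by (simp add: algebra_simps flip: scaleR_2)
    ultimately show ?thesis by (metis midpoint_in_open_segment)
  qed
  ultimately have "d + u \<in> {t *\<^sub>R d | t. t \<ge> 0}"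
    using face_ofD[OF ray _ assms(2,3)] by blast
  then show ?thesis by blast
qed

lemma finite_uniform_margin:
  assumes "finite G" and "\<forall>g\<in>G. f g > (0::real)"
  shows "\<exists>e>0. \<forall>g\<in>G. e * \<bar>h g\<bar> \<le> f g"
proof -
  define e where "e = Min (insert 1 ((\<lambda>g. f g / (\<bar>h g\<bar> + 1)) ` G))"
  have "e > 0" using assms by (simp add: e_def)
  moreover have "e * \<bar>h g\<bar> \<le> f g" if "g \<in> G" for g
  proof -
    have "e \<le> f g / (\<bar>h g\<bar> + 1)" unfolding e_def using assms(1) that by simp
    then have "e * (\<bar>h g\<bar> + 1) \<le> f g" by (simp add: field_simps add_nonneg_pos)
    with \<open>e > 0\<close> show ?thesis by (smt (verit) mult_le_cancel_left1 distrib_left)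
  qed
  ultimately show ?thesis by blast
qed

text \<open>An extreme ray of the polyhedral cone dual to \<open>G\<close> is cut out by a hyperplane through
  \<open>DIM - 1\<close> independent elements of \<open>G\<close>: otherwise some \<open>v\<close> orthogonal to \<open>d\<close> and to these
  elements would give the segment from \<open>d - e v\<close> to \<open>d + e v\<close> inside the cone, for small \<open>e > 0\<close>.\<close>

lemma extreme_ray_polar_dim:
  fixes G :: "'a::euclidean_space set"
  assumes "finite G" and "d \<noteq> 0"
    and ray: "{t *\<^sub>R d | t. t \<ge> 0} face_of {v. \<forall>g\<in>G. v \<bullet> g \<ge> 0}"
  shows "DIM('a) \<le> dim {g\<in>G. d \<bullet> g = 0} + 1"
proof (rule ccontr)
  define G' where "G' = {g\<in>G. d \<bullet> g = 0}"
  assume "\<not> DIM('a) \<le> dim {g\<in>G. d \<bullet> g = 0} + 1"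
  then have "dim (insert d G') < DIM('a)" by (simp add: G'_def dim_insert)
  then obtain v where "v \<noteq> 0" and v_orth: "\<And>y. y \<in> span (insert d G') \<Longrightarrow> orthogonal v y"
    using orthogonal_to_subspace_exists by blast
  then have "v \<bullet> d = 0" and vG': "\<And>g. g \<in> G' \<Longrightarrow> v \<bullet> g = 0"
    by (auto simp: span_base orthogonal_def)
  have "d \<in> {t *\<^sub>R d | t. t \<ge> 0}" by (intro CollectI exI[of _ 1]) auto
  then have d_nonneg: "\<forall>g\<in>G. d \<bullet> g \<ge> 0" using face_of_imp_subset[OF ray] by blast
  then have "\<forall>g\<in>G - G'. d \<bullet> g > 0" by (force simp: G'_def)
  with \<open>finite G\<close> obtain e :: real where "e > 0" and e: "\<forall>g\<in>G - G'. e * \<bar>v \<bullet> g\<bar> \<le> d \<bullet> g"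
    using finite_uniform_margin[of "G - G'"] by blast
  have margin: "\<bar>e * (v \<bullet> g)\<bar> \<le> d \<bullet> g" if "g \<in> G" for g
    using that e vG' d_nonneg \<open>e > 0\<close> by (cases "g \<in> G'") (auto simp: abs_mult)
  have "d - e *\<^sub>R v \<in> {v. \<forall>g\<in>G. v \<bullet> g \<ge> 0}" "d + e *\<^sub>R v \<in> {v. \<forall>g\<in>G. v \<bullet> g \<ge> 0}"
    using margin by (force simp: inner_diff_left inner_add_left abs_le_iff)+
  moreover have "e *\<^sub>R v \<noteq> 0" using \<open>e > 0\<close> \<open>v \<noteq> 0\<close> by simp
  ultimately obtain t where "d + e *\<^sub>R v = t *\<^sub>R d"
    using ray_face_symmetric_perturbation[OF ray] by blast
  then have "e *\<^sub>R v = (t - 1) *\<^sub>R d" by (simp add: algebra_simps)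
  then have "e * (v \<bullet> v) = (t - 1) * (v \<bullet> d)" by (metis inner_scaleR_left inner_commute)
  then have "e * (v \<bullet> v) = 0" using \<open>v \<bullet> d = 0\<close> by simp
  with \<open>e > 0\<close> \<open>v \<noteq> 0\<close> show False by simp
qed

lemma E_set_nonneg: "d \<in> E_set \<Gamma> \<Longrightarrow> g \<in> \<Gamma> \<Longrightarrow> d \<bullet> g \<ge> 0"
proof -
  assume "d \<in> E_set \<Gamma>" "g \<in> \<Gamma>"
  moreover have "d \<in> {t *\<^sub>R d | t. t \<ge> 0}" by (intro CollectI exI[of _ 1]) auto
  ultimately show "d \<bullet> g \<ge> 0"
    unfolding E_set_def dual_cone_def by (blast dest: face_of_imp_subset)
qed

lemma E_set_facet:
  fixes \<Gamma> G :: "(real^'n) set"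
  assumes "finite G" and \<Gamma>: "\<Gamma> = nat_span G" and d: "d \<in> E_set \<Gamma>"
    and full: "dim (int_span \<Gamma>) = DIM(real^'n)"
  shows "real_cone \<Gamma> \<inter> {x. d \<bullet> x = 0} \<in> facets (real_cone \<Gamma>)"
proof -
  define F where "F = real_cone \<Gamma> \<inter> {x. d \<bullet> x = 0}"
  define G' where "G' = {g\<in>G. d \<bullet> g = 0}"
  have "d \<noteq> 0" and "{t *\<^sub>R d | t. t \<ge> 0} face_of {v. \<forall>g\<in>G. v \<bullet> g \<ge> 0}"
    using d by (auto simp: E_set_def primitive_in_def \<Gamma> dual_cone_nat_span)
  then have dim_G': "DIM(real^'n) \<le> dim G' + 1"
    unfolding G'_def using extreme_ray_polar_dim[OF \<open>finite G\<close>] by blast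
  have "F face_of real_cone \<Gamma>" unfolding F_def
    by (rule face_of_Int_supporting_hyperplane_ge[OF convex_real_cone, where b=0, simplified])
      (use inner_real_cone_nonneg E_set_nonneg[OF d] in blast)
  moreover have "int (dim G') \<le> aff_dim F"
  proof -
    have "insert 0 G' \<subseteq> F"
      using zero_in_combos combos_base[of _ G \<nat>] combos_base[of _ \<Gamma>]
      by (auto simp: F_def G'_def \<Gamma>)
    moreover have "aff_dim (insert 0 G') = int (dim G')"
      by (simp add: aff_dim_zero hull_inc dim_insert span_zero)
    ultimately show ?thesis by (metis aff_dim_subset)
  qed
  moreover have "aff_dim F \<le> int DIM(real^'n) - 1"
    using aff_dim_subset[of F "{x. d \<bullet> x = 0}"] \<open>d \<noteq> 0\<close> by (simp add: F_def)
  ultimately show ?thesis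
    using dim_G' aff_dim_real_cone_full[OF full] by (simp add: facets_def F_def)
qed

lemma inner_refl_adjoint: "refl av a u \<bullet> y = u \<bullet> refl a av y"
  by (simp add: refl_def inner_diff_left inner_diff_right inner_commute)

lemma refl_involutive: "av \<bullet> a = 2 \<Longrightarrow> refl a av (refl a av y) = y"
  by (simp add: refl_def inner_diff_right algebra_simps flip: scaleR_2)

lemma inner_coroot_refl: "av \<bullet> a = 2 \<Longrightarrow> av \<bullet> refl a av y = - (av \<bullet> y)"
  by (simp add: refl_def inner_diff_right)

lemma orthogonal_span_hyperplane: "\<forall>z\<in>F. v \<bullet> z = 0 \<Longrightarrow> y \<in> span F \<Longrightarrow> v \<bullet> y = 0"
  using orthogonal_to_span[of y F v] by (simp add: orthogonal_def)

lemma reflected_facet_pairing_nonneg: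
  fixes a av d x :: "real^'n"
  assumes "av \<bullet> a = 2" and refl_span: "refl a av ` span F = span F'"
    and "F' \<subseteq> C" and d_nonneg: "\<forall>z\<in>C. d \<bullet> z \<ge> 0" and av_nonneg: "\<forall>z\<in>C. av \<bullet> z \<ge> 0"
    and F_orth: "\<forall>z\<in>F. d \<bullet> z = 0" and "x \<in> F" and "av \<bullet> x > 0"
  shows "d \<bullet> a \<ge> 0"
proof (rule ccontr)
  assume "\<not> d \<bullet> a \<ge> 0"
  have "av \<bullet> z = 0" if "z \<in> F'" for z
  proof -
    obtain y where "y \<in> span F" and z: "z = refl a av y"
      using refl_span span_base[OF \<open>z \<in> F'\<close>] by blast
    have "refl av a d \<bullet> z = d \<bullet> y"
      by (simp add: z inner_refl_adjoint refl_involutive \<open>av \<bullet> a = 2\<close>)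
    also have "\<dots> = 0" using orthogonal_span_hyperplane[OF F_orth \<open>y \<in> span F\<close>] .
    finally have "d \<bullet> z - (d \<bullet> a) * (av \<bullet> z) = 0"
      by (simp add: refl_def inner_diff_left inner_commute[of a d])
    moreover have "d \<bullet> z \<ge> 0" "av \<bullet> z \<ge> 0" using that \<open>F' \<subseteq> C\<close> d_nonneg av_nonneg by auto
    ultimately show ?thesis using \<open>\<not> d \<bullet> a \<ge> 0\<close>
      by (smt (verit) mult_neg_pos)
  qed
  moreover have "refl a av x \<in> span F'" using refl_span \<open>x \<in> F\<close> span_base by blast
  ultimately have "av \<bullet> refl a av x = 0" by (metis orthogonal_span_hyperplane)
  with \<open>av \<bullet> x > 0\<close> show False by (simp add: inner_coroot_refl \<open>av \<bullet> a = 2\<close>)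
qed

theorem mainTheorem17:
  fixes R S :: "(real^'n) set" and cor :: "real^'n \<Rightarrow> real^'n" and \<Gamma> :: "(real^'n) set"
  assumes "root_datum R cor" and "reduced R" and "is_base R S"
    and "fg_monoid \<Gamma>" and "\<Gamma> \<subseteq> dominant S cor"
    and "reflective R S cor \<Gamma>"
    and "S \<subseteq> int_span \<Gamma>"
    and "part_of_lattice_basis (E_set \<Gamma>) (dual_lattice \<Gamma>)"
    and "\<forall>w\<in>weyl_group R cor. w ` int_span \<Gamma> \<subseteq> int_span \<Gamma>"
  shows "\<forall>d\<in>E_set \<Gamma>. \<forall>a\<in>S. d \<bullet> a \<ge> 0"
proof (intro ballI)
  fix d a assume d: "d \<in> E_set \<Gamma>" and "a \<in> S"
  have full: "dim (int_span \<Gamma>) = DIM(real^'n)"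
    and stable: "\<forall>w\<in>weyl_group R cor. \<forall>F\<in>facets (real_cone \<Gamma>).
                   \<exists>F'\<in>facets (real_cone \<Gamma>). w ` span F = span F'"
    and meets_chamber: "\<forall>F\<in>facets (real_cone \<Gamma>). F \<inter> open_chamber S cor \<noteq> {}"
    using \<open>reflective R S cor \<Gamma>\<close> by (simp_all add: reflective_def)
  have "a \<in> R" using \<open>a \<in> S\<close> \<open>is_base R S\<close> by (auto simp: is_base_def)
  then have "cor a \<bullet> a = 2" using \<open>root_datum R cor\<close> unfolding root_datum_def by blast
  obtain G where "finite G" "\<Gamma> = nat_span G" using \<open>fg_monoid \<Gamma>\<close> by (auto simp: fg_monoid_def)
  define F where "F = real_cone \<Gamma> \<inter> {x. d \<bullet> x = 0}"
  have F: "F \<in> facets (real_cone \<Gamma>)"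
    unfolding F_def using E_set_facet[OF \<open>finite G\<close> \<open>\<Gamma> = nat_span G\<close> d full] .
  then obtain x where "x \<in> F" "x \<in> open_chamber S cor" using meets_chamber by blast
  then have "cor a \<bullet> x > 0" using \<open>a \<in> S\<close> by (simp add: open_chamber_def)
  have "refl a (cor a) \<circ> id \<in> weyl_group R cor" by (rule weyl_step[OF weyl_id \<open>a \<in> R\<close>])
  with F stable obtain F' where "F' \<in> facets (real_cone \<Gamma>)" "refl a (cor a) ` span F = span F'"
    by (metis id_comp comp_id)
  then have "F' \<subseteq> real_cone \<Gamma>" by (simp add: facets_def face_of_imp_subset)
  moreover have "\<forall>g\<in>\<Gamma>. cor a \<bullet> g \<ge> 0"
    using \<open>\<Gamma> \<subseteq> dominant S cor\<close> \<open>a \<in> S\<close> by (auto simp: dominant_def)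
  then have "\<forall>z\<in>real_cone \<Gamma>. cor a \<bullet> z \<ge> 0" using inner_real_cone_nonneg by blast
  moreover have "\<forall>z\<in>real_cone \<Gamma>. d \<bullet> z \<ge> 0"
    using inner_real_cone_nonneg E_set_nonneg[OF d] by blast
  ultimately show "d \<bullet> a \<ge> 0"
    using reflected_facet_pairing_nonneg[OF \<open>cor a \<bullet> a = 2\<close> \<open>refl a (cor a) ` span F = span F'\<close>]
      \<open>x \<in> F\<close> \<open>cor a \<bullet> x > 0\<close> by (simp add: F_def)
qed

end
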